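(* Let $K\subseteq\mathbb{R}^d$ be a compact connected set. Suppose that for every $x\in K$ there is $C_x>0$ such that for all $f\in C^1(K)$ and all $y\in K\setminus\{x\}$, $\frac{|f(y)-f(x)|}{|y-x|}\le C_x\|f\|_{C^1(K)}$. Then $K$ is pointwise Whitney regular.
   Context: $C^1(K)$ is the set of $f:K\to\mathbb{R}$ admitting a continuous $df:K\to\mathbb{R}^d$ with $\lim_{y\to x,\,y\in K\setminus\{x\}}\frac{f(y)-f(x)-\langle df(x),y-x\rangle}{|y-x|}=0$ for all $x\in K$, normed by $\|f\|_{C^1(K)}=\|f\|_K+\inf\{\|df\|_K: df \text{ a continuous derivative of } f\}$. $K$ is pointwise Whitney regular if for every $x\in K$ there are a neighbourhood $V_x$ of $x$ and $C_x>0$ such that every $y\in V_x\cap K$ is joined to $x$ by a rectifiable path in $K$ of length at most $C_x|x-y|$ (a rectifiable path is a continuous map $\gamma:[a,b]\to K$ of finite length $\sup\sum_j|\gamma(t_j)-\gamma(t_{j-1})|$). *)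

theory Defs
  imports "HOL-Analysis.Analysis"
begin

definition is_C1_deriv :: "'a::euclidean_space set \<Rightarrow> ('a \<Rightarrow> real) \<Rightarrow> ('a \<Rightarrow> 'a) \<Rightarrow> bool" where
  "is_C1_deriv K f df \<longleftrightarrow> continuous_on K df \<and>
     (\<forall>x\<in>K. ((\<lambda>y. (f y - f x - inner (df x) (y - x)) / norm (y - x)) \<longlongrightarrow> 0) (at x within K))"

definition C1 :: "'a::euclidean_space set \<Rightarrow> ('a \<Rightarrow> real) set" where
  "C1 K = {f. \<exists>df. is_C1_deriv K f df}"

definition C1_norm :: "'a::euclidean_space set \<Rightarrow> ('a \<Rightarrow> real) \<Rightarrow> real" where
  "C1_norm K f = (SUP x\<in>K. \<bar>f x\<bar>) + (INF df\<in>{df. is_C1_deriv K f df}. (SUP x\<in>K. norm (df x)))"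

definition chord_sums :: "(real \<Rightarrow> 'a::real_normed_vector) \<Rightarrow> real \<Rightarrow> real \<Rightarrow> real set" where
  "chord_sums g a b = {(\<Sum>j\<in>{1..n}. norm (g (t j) - g (t (j - 1)))) | t n.
      t 0 = a \<and> t n = b \<and> (\<forall>j<n. t j \<le> t (Suc j))}"

definition path_length :: "(real \<Rightarrow> 'a::real_normed_vector) \<Rightarrow> real \<Rightarrow> real \<Rightarrow> real" where
  "path_length g a b = Sup (chord_sums g a b)"

definition rectifiable_path_in :: "'a::real_normed_vector set \<Rightarrow> (real \<Rightarrow> 'a) \<Rightarrow> real \<Rightarrow> real \<Rightarrow> bool" where
  "rectifiable_path_in K g a b \<longleftrightarrow> a \<le> b \<and> continuous_on {a..b} g \<and> g ` {a..b} \<subseteq> K \<and>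
     bdd_above (chord_sums g a b)"

definition pointwise_whitney_regular :: "'a::euclidean_space set \<Rightarrow> bool" where
  "pointwise_whitney_regular K \<longleftrightarrow> (\<forall>x\<in>K. \<exists>V C. open V \<and> x \<in> V \<and> C > 0 \<and>
     (\<forall>y\<in>V \<inter> K. \<exists>g a b. rectifiable_path_in K g a b \<and> g a = x \<and> g b = y \<and>
        path_length g a b \<le> C * norm (x - y)))"

end

theory Submission imports Defs "HOL-Complex_Analysis.Great_Picard" begin

text \<open>Fix \<open>x \<in> K\<close>, a mesh \<open>e > 0\<close> and a cap \<open>T\<close>, and let \<open>g w\<close> be the length of the shortest
  \<open>e\<close>-chain in \<open>K\<close> from \<open>x\<close> to \<open>w\<close>, truncated at \<open>T\<close>. Then \<open>g\<close> is \<open>1\<close>-Lipschitz at scale \<open>e\<close>,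
  so interpolating it with a smooth partition of unity subordinate to a fine cubical lattice gives
  \<open>f \<in> C\<^sup>1(K)\<close> with \<open>|f - g| \<le> T/4\<close> and \<open>|df| \<le> 2 \<pi> d\<^sup>2\<close>. If \<open>y\<close> is close to \<open>x\<close> and no \<open>e\<close>-chain of
  length \<open>T = A |y - x|\<close> joins them, then \<open>g y = T\<close>, and the hypothesis at \<open>x\<close> applied to \<open>f\<close> gives
  \<open>A / 2 \<le> C (2 + 2 \<pi> d\<^sup>2)\<close>, which fails for \<open>A\<close> large. Hence short \<open>e\<close>-chains exist for every
  \<open>e\<close>, and an Arzela-Ascoli argument turns them into a rectifiable path of length
  \<open>\<le> A |y - x|\<close>.\<close>

definition cos_bump :: "real \<Rightarrow> real" where
  "cos_bump t = (1 + cos (pi * max (-1) (min 1 t))) / 2"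

definition cos_bump_deriv :: "real \<Rightarrow> real" where
  "cos_bump_deriv t = - (pi / 2) * sin (pi * max (-1) (min 1 t))"

lemma continuous_on_cos_bump [continuous_intros]:
  assumes "continuous_on S f"
  shows "continuous_on S (\<lambda>x. cos_bump (f x))"
proof -
  have "continuous_on UNIV cos_bump"
    unfolding cos_bump_def by (intro continuous_intros) auto
  then show ?thesis by (rule continuous_on_compose2[OF _ assms]) simp
qed

lemma continuous_on_cos_bump_deriv [continuous_intros]:
  assumes "continuous_on S f"
  shows "continuous_on S (\<lambda>x. cos_bump_deriv (f x))"
proof -
  have "continuous_on UNIV cos_bump_deriv"
    unfolding cos_bump_deriv_def by (intro continuous_intros)
  then show ?thesis by (rule continuous_on_compose2[OF _ assms]) simp
qed

lemma cos_bump_nonneg: "0 \<le> cos_bump t"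
  unfolding cos_bump_def using cos_ge_minus_one[of "pi * max (-1) (min 1 t)"]
  by (intro divide_nonneg_pos) linarith+

lemma abs_cos_bump_deriv_le: "\<bar>cos_bump_deriv t\<bar> \<le> pi / 2"
  unfolding cos_bump_deriv_def by (simp add: abs_mult abs_sin_le_one)

lemma cos_bump_outside:
  assumes "1 \<le> \<bar>t\<bar>"
  shows "cos_bump t = 0" and "cos_bump_deriv t = 0"
proof -
  have clamped: "max (-1) (min 1 t) = (if 0 \<le> t then 1 else -1)" using assms by auto
  show "cos_bump t = 0" "cos_bump_deriv t = 0"
    unfolding cos_bump_def cos_bump_deriv_def clamped by simp_all
qed

lemma cos_bump_inside:
  assumes "\<bar>t\<bar> \<le> 1"
  shows "cos_bump t = (1 + cos (pi * t)) / 2" and "cos_bump_deriv t = - (pi / 2) * sin (pi * t)"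
proof -
  have clamped: "max (-1) (min 1 t) = t" using assms by auto
  show "cos_bump t = (1 + cos (pi * t)) / 2" "cos_bump_deriv t = - (pi / 2) * sin (pi * t)"
    unfolding cos_bump_def cos_bump_deriv_def clamped by simp_all
qed

lemma cos_bump_piecewise:
  "cos_bump t = (if \<bar>t\<bar> \<le> 1 then (1 + cos (pi * t)) / 2 else 0)"
  "cos_bump_deriv t = (if \<bar>t\<bar> \<le> 1 then - (pi / 2) * sin (pi * t) else 0)"
  by (cases "\<bar>t\<bar> \<le> 1"; simp add: cos_bump_inside cos_bump_outside)+

lemma cos_bump_has_derivative: "(cos_bump has_derivative (\<lambda>h. cos_bump_deriv t * h)) (at t)"
proof -
  define S :: "real set" where "S = {-1..1}"
  define f where "f s = (1 + cos (pi * s)) / 2" for s :: real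
  define f' where "f' s = (\<lambda>h. (- (pi / 2) * sin (pi * s)) * h)" for s :: real
  have boundary: "s = 1 \<or> s = -1" if "s \<in> closure S" "s \<in> closure (- S)" for s
  proof -
    have "closure (- S) \<subseteq> - {-1<..<1}"
      by (rule closure_minimal) (auto simp: S_def)
    then show ?thesis using that by (auto simp: S_def)
  qed
  have "((\<lambda>s. if s \<in> S then f s else 0) has_derivative (if t \<in> S then f' t else (\<lambda>h. 0)))
      (at t within S \<union> - S)"
  proof (rule has_derivative_If_within_closures)
    have "(f has_real_derivative - (pi / 2) * sin (pi * t)) (at t)"
      unfolding f_def by (auto intro!: derivative_eq_intros)
    then have "(f has_derivative f' t) (at t)"
      unfolding has_field_derivative_def f'_def .
    then show "(f has_derivative f' t) (at t within S \<union> (closure S \<inter> closure (- S)))"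
      by (rule has_derivative_at_withinI)
    show "f t = 0" "f' t = (\<lambda>h. 0)" if "t \<in> closure S" "t \<in> closure (- S)"
      using boundary[OF that] by (auto simp: f_def f'_def)
    show "((\<lambda>s. 0) has_derivative (\<lambda>h. 0)) (at t within - S \<union> (closure S \<inter> closure (- S)))"
      by simp
    show "t \<in> S \<union> - S" by blast
  qed
  moreover have "(\<lambda>s. if s \<in> S then f s else 0) = cos_bump"
    by (rule ext) (simp add: cos_bump_piecewise abs_le_iff S_def f_def)
  moreover have "(if t \<in> S then f' t else (\<lambda>h. 0)) = (\<lambda>h. cos_bump_deriv t * h)"
    by (auto simp: cos_bump_piecewise abs_le_iff S_def f'_def)
  ultimately show ?thesis by simp
qed

lemma sum_translates_two_terms:
  fixes F :: "real \<Rightarrow> real" and t :: real and N :: int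
  assumes "\<bar>t\<bar> \<le> real_of_int N - 1" and "\<And>u. 1 \<le> \<bar>u\<bar> \<Longrightarrow> F u = 0"
  shows "(\<Sum>k\<in>{-N..N}. F (t - of_int k)) = F (t - \<lfloor>t\<rfloor>) + F (t - \<lfloor>t\<rfloor> - 1)"
proof -
  have "(\<Sum>k\<in>{-N..N}. F (t - of_int k)) = (\<Sum>k\<in>{\<lfloor>t\<rfloor>, \<lfloor>t\<rfloor> + 1}. F (t - of_int k))"
  proof (rule sum.mono_neutral_right)
    have "- real_of_int N < real_of_int \<lfloor>t\<rfloor> + 1" "real_of_int \<lfloor>t\<rfloor> + 1 \<le> real_of_int N"
      using assms(1) by linarith+
    then show "{\<lfloor>t\<rfloor>, \<lfloor>t\<rfloor> + 1} \<subseteq> {-N..N}" by simp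
    show "\<forall>k\<in>{-N..N} - {\<lfloor>t\<rfloor>, \<lfloor>t\<rfloor> + 1}. F (t - of_int k) = 0"
    proof
      fix k assume "k \<in> {-N..N} - {\<lfloor>t\<rfloor>, \<lfloor>t\<rfloor> + 1}"
      then have "k \<le> \<lfloor>t\<rfloor> - 1 \<or> \<lfloor>t\<rfloor> + 2 \<le> k" by auto
      then have "1 \<le> \<bar>t - of_int k\<bar>" by linarith
      then show "F (t - of_int k) = 0" by (rule assms(2))
    qed
  qed simp
  then show ?thesis by (simp add: algebra_simps)
qed

lemma sum_cos_bump_translates:
  fixes t :: real and N :: int
  assumes "\<bar>t\<bar> \<le> real_of_int N - 1"
  shows "(\<Sum>k\<in>{-N..N}. cos_bump (t - of_int k)) = 1"
proof -
  define s where "s = t - \<lfloor>t\<rfloor>"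
  have s: "0 \<le> s" "s < 1" unfolding s_def by linarith+
  have "(\<Sum>k\<in>{-N..N}. cos_bump (t - of_int k)) = cos_bump s + cos_bump (s - 1)"
    unfolding s_def by (rule sum_translates_two_terms[OF assms]) (rule cos_bump_outside(1))
  also have "\<dots> = (1 + cos (pi * s)) / 2 + (1 + cos (pi * s - pi)) / 2"
    using s by (simp add: cos_bump_inside right_diff_distrib)
  also have "\<dots> = 1" by (simp add: cos_diff add_divide_distrib[symmetric])
  finally show ?thesis .
qed

lemma sum_abs_cos_bump_deriv_translates_le:
  fixes t :: real and N :: int
  assumes "\<bar>t\<bar> \<le> real_of_int N - 1"
  shows "(\<Sum>k\<in>{-N..N}. \<bar>cos_bump_deriv (t - of_int k)\<bar>) \<le> pi"
proof -
  have "(\<Sum>k\<in>{-N..N}. \<bar>cos_bump_deriv (t - of_int k)\<bar>) =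
      \<bar>cos_bump_deriv (t - \<lfloor>t\<rfloor>)\<bar> + \<bar>cos_bump_deriv (t - \<lfloor>t\<rfloor> - 1)\<bar>"
    by (rule sum_translates_two_terms[OF assms]) (simp add: cos_bump_outside(2))
  then show ?thesis
    using abs_cos_bump_deriv_le[of "t - \<lfloor>t\<rfloor>"] abs_cos_bump_deriv_le[of "t - \<lfloor>t\<rfloor> - 1"] by simp
qed

text \<open>\<open>lattice_bump r v\<close> is supported in the open cube of half-side \<open>r\<close> centred at the lattice
  point \<open>r v\<close>; the bumps over all \<open>v \<in> \<int>\<^sup>d\<close> form a partition of unity.\<close>

definition lattice_bump :: "real \<Rightarrow> ('a::euclidean_space \<Rightarrow> int) \<Rightarrow> 'a \<Rightarrow> real" where
  "lattice_bump r v z = (\<Prod>i\<in>Basis. cos_bump (z \<bullet> i / r - of_int (v i)))"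

definition lattice_bump_grad :: "real \<Rightarrow> ('a::euclidean_space \<Rightarrow> int) \<Rightarrow> 'a \<Rightarrow> 'a" where
  "lattice_bump_grad r v z = (\<Sum>i\<in>Basis. (cos_bump_deriv (z \<bullet> i / r - of_int (v i)) / r *
      (\<Prod>j\<in>Basis - {i}. cos_bump (z \<bullet> j / r - of_int (v j)))) *\<^sub>R i)"

lemma cos_bump_coordinate_has_derivative:
  fixes i :: "'a::euclidean_space"
  shows "((\<lambda>z. cos_bump (z \<bullet> i / r - c)) has_derivative (\<lambda>h. cos_bump_deriv (z \<bullet> i / r - c) * (h \<bullet> i / r))) (at z)"
proof -
  have bl: "bounded_linear (\<lambda>h::'a. h \<bullet> i / r)"
    using bounded_linear_compose[OF bounded_linear_divide[of r] bounded_linear_inner_left[of i]]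
    by (simp add: o_def)
  have d0: "((\<lambda>z. z \<bullet> i / r) has_derivative (\<lambda>h. h \<bullet> i / r)) (at z)"
    by (rule bounded_linear_imp_has_derivative[OF bl])
  have d1: "((\<lambda>z. z \<bullet> i / r - c) has_derivative (\<lambda>h. h \<bullet> i / r)) (at z)"
    using has_derivative_diff[OF d0 has_derivative_const[of c]] by simp
  show ?thesis using has_derivative_compose[OF d1 cos_bump_has_derivative] by simp
qed

lemma lattice_bump_has_derivative: "(lattice_bump r v has_derivative (\<lambda>h. lattice_bump_grad r v z \<bullet> h)) (at z)"
proof -
  have "((\<lambda>z. \<Prod>i\<in>Basis. cos_bump (z \<bullet> i / r - of_int (v i))) has_derivative
     (\<lambda>h. \<Sum>i\<in>Basis. cos_bump_deriv (z \<bullet> i / r - of_int (v i)) * (h \<bullet> i / r) *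
        (\<Prod>j\<in>Basis - {i}. cos_bump (z \<bullet> j / r - of_int (v j))))) (at z)"
    by (rule has_derivative_prod) (rule cos_bump_coordinate_has_derivative)
  moreover have "(\<lambda>h. \<Sum>i\<in>Basis. cos_bump_deriv (z \<bullet> i / r - of_int (v i)) * (h \<bullet> i / r) *
        (\<Prod>j\<in>Basis - {i}. cos_bump (z \<bullet> j / r - of_int (v j)))) = (\<lambda>h. lattice_bump_grad r v z \<bullet> h)"
  proof (rule ext)
    fix h :: 'a
    show "(\<Sum>i\<in>Basis. cos_bump_deriv (z \<bullet> i / r - of_int (v i)) * (h \<bullet> i / r) *
        (\<Prod>j\<in>Basis - {i}. cos_bump (z \<bullet> j / r - of_int (v j)))) = lattice_bump_grad r v z \<bullet> h"
      unfolding lattice_bump_grad_def inner_sum_left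
      by (rule sum.cong[OF refl]) (simp add: inner_commute[of h])
  qed
  ultimately show ?thesis unfolding lattice_bump_def[abs_def] by simp
qed

lemma sum_lattice_bump:
  fixes z :: "'a::euclidean_space" and N :: int
  assumes "\<And>i. i \<in> Basis \<Longrightarrow> \<bar>z \<bullet> i / r\<bar> \<le> real_of_int N - 1"
  shows "(\<Sum>v\<in>PiE Basis (\<lambda>_. {-N..N}). lattice_bump r v z) = 1"
proof -
  have "(\<Sum>v\<in>PiE Basis (\<lambda>_. {-N..N}). lattice_bump r v z) =
      (\<Prod>i\<in>Basis. \<Sum>k\<in>{-N..N}. cos_bump (z \<bullet> i / r - of_int k))"
    unfolding lattice_bump_def by (rule prod_sum_PiE[symmetric]) auto
  also have "\<dots> = (\<Prod>i\<in>(Basis::'a set). 1)"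
    by (rule prod.cong) (auto intro: sum_cos_bump_translates assms)
  finally show ?thesis by simp
qed

lemma lattice_bump_outside_cube:
  fixes z :: "'a::euclidean_space"
  assumes "j \<in> Basis" "1 \<le> \<bar>z \<bullet> j / r - of_int (v j)\<bar>"
  shows "lattice_bump r v z = 0" "lattice_bump_grad r v z = 0"
proof -
  have z1: "cos_bump (z \<bullet> j / r - of_int (v j)) = 0" "cos_bump_deriv (z \<bullet> j / r - of_int (v j)) = 0"
    using cos_bump_outside[OF assms(2)] by auto
  show "lattice_bump r v z = 0" unfolding lattice_bump_def using assms(1) z1 by (intro prod_zero) auto
  have Z: "(cos_bump_deriv (z \<bullet> i / r - of_int (v i)) / r *
      (\<Prod>j\<in>Basis - {i}. cos_bump (z \<bullet> j / r - of_int (v j)))) = 0" if "i \<in> Basis" for i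
  proof (cases "i = j")
    case True
    then show ?thesis using z1 by simp
  next
    case False
    have "(\<Prod>j\<in>Basis - {i}. cos_bump (z \<bullet> j / r - of_int (v j))) = 0"
      using assms(1) False z1 by (intro prod_zero) auto
    then show ?thesis by simp
  qed
  show "lattice_bump_grad r v z = 0" unfolding lattice_bump_grad_def
  proof (rule sum.neutral, intro ballI)
    fix i :: 'a assume "i \<in> Basis"
    show "(cos_bump_deriv (z \<bullet> i / r - of_int (v i)) / r *
      (\<Prod>j\<in>Basis - {i}. cos_bump (z \<bullet> j / r - of_int (v j)))) *\<^sub>R i = 0"
      unfolding Z[OF \<open>i \<in> Basis\<close>] by simp
  qed
qed

lemma norm_lattice_bump_grad_le:
  fixes z :: "'a::euclidean_space"
  assumes "r > 0"
  shows "norm (lattice_bump_grad r v z) \<le> (\<Sum>i\<in>Basis. \<bar>cos_bump_deriv (z \<bullet> i / r - of_int (v i))\<bar> / r *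
      (\<Prod>j\<in>Basis - {i}. cos_bump (z \<bullet> j / r - of_int (v j))))"
proof -
  have "norm (lattice_bump_grad r v z) \<le> (\<Sum>i\<in>Basis. norm ((cos_bump_deriv (z \<bullet> i / r - of_int (v i)) / r *
      (\<Prod>j\<in>Basis - {i}. cos_bump (z \<bullet> j / r - of_int (v j)))) *\<^sub>R i))"
    unfolding lattice_bump_grad_def by (rule norm_sum)
  also have "\<dots> = (\<Sum>i\<in>Basis. \<bar>cos_bump_deriv (z \<bullet> i / r - of_int (v i))\<bar> / r *
      (\<Prod>j\<in>Basis - {i}. cos_bump (z \<bullet> j / r - of_int (v j))))"
  proof (rule sum.cong)
    fix i :: 'a assume "i \<in> Basis"
    have p: "0 \<le> (\<Prod>j\<in>Basis - {i}. cos_bump (z \<bullet> j / r - of_int (v j)))"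
      by (intro prod_nonneg) (simp add: cos_bump_nonneg)
    show "norm ((cos_bump_deriv (z \<bullet> i / r - of_int (v i)) / r *
      (\<Prod>j\<in>Basis - {i}. cos_bump (z \<bullet> j / r - of_int (v j)))) *\<^sub>R i) =
      \<bar>cos_bump_deriv (z \<bullet> i / r - of_int (v i))\<bar> / r * (\<Prod>j\<in>Basis - {i}. cos_bump (z \<bullet> j / r - of_int (v j)))"
      using \<open>i \<in> Basis\<close> p assms by (simp add: abs_mult)
  qed simp
  finally show ?thesis .
qed

lemma sum_PiE_mult_prod_remove:
  fixes g :: "'b \<Rightarrow> 'c::comm_semiring_1"
  assumes "finite I" "i \<in> I" "\<And>j. j \<in> I \<Longrightarrow> finite (A j)"
  shows "(\<Sum>v\<in>PiE I A. g (v i) * (\<Prod>j\<in>I - {i}. f j (v j))) =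
    (\<Sum>k\<in>A i. g k) * (\<Prod>j\<in>I - {i}. \<Sum>k\<in>A j. f j k)"
proof -
  define F where "F j k = (if j = i then g k else f j k)" for j k
  have "(\<Sum>v\<in>PiE I A. g (v i) * (\<Prod>j\<in>I - {i}. f j (v j))) = (\<Sum>v\<in>PiE I A. \<Prod>j\<in>I. F j (v j))"
    using assms(1,2) by (intro sum.cong refl) (simp add: prod.remove F_def)
  also have "\<dots> = (\<Prod>j\<in>I. \<Sum>k\<in>A j. F j k)"
    using assms(1,3) by (rule prod_sum_PiE[symmetric])
  also have "\<dots> = (\<Sum>k\<in>A i. g k) * (\<Prod>j\<in>I - {i}. \<Sum>k\<in>A j. f j k)"
    using assms(1,2) by (simp add: prod.remove F_def)
  finally show ?thesis .
qed

lemma sum_norm_lattice_bump_grad_le: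
  fixes z :: "'a::euclidean_space" and N :: int
  assumes "r > 0" and box: "\<And>i. i \<in> Basis \<Longrightarrow> \<bar>z \<bullet> i / r\<bar> \<le> real_of_int N - 1"
  shows "(\<Sum>v\<in>PiE Basis (\<lambda>_. {-N..N}). norm (lattice_bump_grad r v z)) \<le> DIM('a) * pi / r"
proof -
  define t where "t i = z \<bullet> i / r" for i
  let ?G = "PiE (Basis::'a set) (\<lambda>_. {-N..N})"
  have "(\<Sum>v\<in>?G. norm (lattice_bump_grad r v z)) \<le>
      (\<Sum>v\<in>?G. \<Sum>i\<in>Basis. \<bar>cos_bump_deriv (t i - of_int (v i))\<bar> / r *
        (\<Prod>j\<in>Basis - {i}. cos_bump (t j - of_int (v j))))"
    unfolding t_def by (intro sum_mono norm_lattice_bump_grad_le assms(1))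
  also have "\<dots> = (\<Sum>i\<in>Basis. \<Sum>v\<in>?G. \<bar>cos_bump_deriv (t i - of_int (v i))\<bar> / r *
      (\<Prod>j\<in>Basis - {i}. cos_bump (t j - of_int (v j))))"
    by (rule sum.swap)
  also have "\<dots> = (\<Sum>i\<in>Basis. (\<Sum>k\<in>{-N..N}. \<bar>cos_bump_deriv (t i - of_int k)\<bar> / r) *
      (\<Prod>j\<in>Basis - {i}. \<Sum>k\<in>{-N..N}. cos_bump (t j - of_int k)))"
    by (intro sum.cong refl sum_PiE_mult_prod_remove) auto
  also have "\<dots> \<le> (\<Sum>i\<in>(Basis::'a set). pi / r)"
  proof (rule sum_mono)
    fix i :: 'a assume "i \<in> Basis"
    have "(\<Prod>j\<in>Basis - {i}. \<Sum>k\<in>{-N..N}. cos_bump (t j - of_int k)) = 1"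
      unfolding t_def by (intro prod.neutral ballI sum_cos_bump_translates box) auto
    moreover have "(\<Sum>k\<in>{-N..N}. \<bar>cos_bump_deriv (t i - of_int k)\<bar> / r) \<le> pi / r"
      unfolding t_def sum_divide_distrib[symmetric] using assms(1)
      by (intro divide_right_mono sum_abs_cos_bump_deriv_translates_le box \<open>i \<in> Basis\<close>) simp
    ultimately show "(\<Sum>k\<in>{-N..N}. \<bar>cos_bump_deriv (t i - of_int k)\<bar> / r) *
        (\<Prod>j\<in>Basis - {i}. \<Sum>k\<in>{-N..N}. cos_bump (t j - of_int k)) \<le> pi / r"
      by simp
  qed
  finally show ?thesis by simp
qed

lemma lattice_bump_nonneg: "0 \<le> lattice_bump r v z"
  unfolding lattice_bump_def by (intro prod_nonneg) (simp add: cos_bump_nonneg)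

lemma continuous_on_lattice_bump_grad: "continuous_on S (lattice_bump_grad r v)"
  unfolding lattice_bump_grad_def[abs_def] divide_inverse by (intro continuous_intros)

lemma sum_lattice_bump_grad_eq_0:
  fixes z :: "'a::euclidean_space" and N :: int
  assumes r: "r > 0" and box: "\<And>w i. w \<in> ball z r \<Longrightarrow> i \<in> Basis \<Longrightarrow> \<bar>w \<bullet> i / r\<bar> \<le> real_of_int N - 1"
  shows "(\<Sum>v\<in>PiE Basis (\<lambda>_. {-N..N}). lattice_bump_grad r v z) = 0"
proof -
  define G where "G = PiE (Basis::'a set) (\<lambda>_. {-N..N})"
  define D where "D = (\<Sum>v\<in>G. lattice_bump_grad r v z)"
  have "((\<lambda>w. \<Sum>v\<in>G. lattice_bump r v w) has_derivative (\<lambda>h. \<Sum>v\<in>G. lattice_bump_grad r v z \<bullet> h)) (at z)"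
    by (intro has_derivative_sum lattice_bump_has_derivative)
  then have deriv: "((\<lambda>w. \<Sum>v\<in>G. lattice_bump r v w) has_derivative (\<lambda>h. D \<bullet> h)) (at z)"
    by (simp add: D_def inner_sum_left)
  have one: "(\<Sum>v\<in>G. lattice_bump r v w) = 1" if "w \<in> ball z r" for w
    unfolding G_def by (rule sum_lattice_bump) (rule box[OF that])
  have "((\<lambda>w. 1) has_derivative (\<lambda>h. D \<bullet> h)) (at z)"
    by (rule has_derivative_transform_within_open[OF deriv open_ball]) (use r one in auto)
  then have "(\<lambda>h. D \<bullet> h) = (\<lambda>h. 0)"
    using has_derivative_unique has_derivative_const by blast
  then have "D \<bullet> D = 0" by metis
  then show ?thesis by (simp add: D_def G_def)
qed

text \<open>Since the bumps form a partition of unity near \<open>z\<close>, both the value and the gradient of the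
  interpolant at \<open>z\<close> only see the deviations \<open>c v - a\<close> of the coefficients of active bumps.\<close>

lemma lattice_interpolant_estimates:
  fixes z :: "'a::euclidean_space" and N :: int and c :: "('a \<Rightarrow> int) \<Rightarrow> real"
  defines "G \<equiv> PiE Basis (\<lambda>_. {-N..N})"
  assumes r: "r > 0" and "0 \<le> \<delta>"
    and box: "\<And>w i. w \<in> ball z r \<Longrightarrow> i \<in> Basis \<Longrightarrow> \<bar>w \<bullet> i / r\<bar> \<le> real_of_int N - 1"
    and close: "\<And>v. \<forall>i\<in>Basis. \<bar>z \<bullet> i / r - of_int (v i)\<bar> < 1 \<Longrightarrow> \<bar>c v - a\<bar> \<le> \<delta>"
  shows "\<bar>(\<Sum>v\<in>G. c v * lattice_bump r v z) - a\<bar> \<le> \<delta>"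
    and "norm (\<Sum>v\<in>G. c v *\<^sub>R lattice_bump_grad r v z) \<le> \<delta> * DIM('a) * pi / r"
proof -
  have active: "\<bar>c v - a\<bar> \<le> \<delta> \<or> (lattice_bump r v z = 0 \<and> lattice_bump_grad r v z = 0)" for v
    using close lattice_bump_outside_cube[of _ z r v] by (meson not_less)
  have box_z: "\<bar>z \<bullet> i / r\<bar> \<le> real_of_int N - 1" if "i \<in> Basis" for i
    using box[OF _ that, of z] r by simp
  have "(\<Sum>v\<in>G. c v * lattice_bump r v z) - a = (\<Sum>v\<in>G. (c v - a) * lattice_bump r v z)"
    using sum_lattice_bump[OF box_z] by (simp add: G_def algebra_simps sum_subtractf sum_distrib_left[symmetric])
  also have "\<bar>\<dots>\<bar> \<le> (\<Sum>v\<in>G. \<delta> * lattice_bump r v z)"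
  proof (rule sum_abs[THEN order_trans], rule sum_mono)
    fix v assume "v \<in> G"
    then show "\<bar>(c v - a) * lattice_bump r v z\<bar> \<le> \<delta> * lattice_bump r v z"
      using active[of v] lattice_bump_nonneg[of r v z] by (auto simp: abs_mult intro: mult_right_mono)
  qed
  also have "\<dots> = \<delta>"
    using sum_lattice_bump[OF box_z] by (simp add: G_def sum_distrib_left[symmetric])
  finally show "\<bar>(\<Sum>v\<in>G. c v * lattice_bump r v z) - a\<bar> \<le> \<delta>" .
  have "(\<Sum>v\<in>G. c v *\<^sub>R lattice_bump_grad r v z) = (\<Sum>v\<in>G. (c v - a) *\<^sub>R lattice_bump_grad r v z)"
    using sum_lattice_bump_grad_eq_0[OF r box]
    by (simp add: G_def scaleR_diff_left sum_subtractf scaleR_sum_right[symmetric])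
  also have "norm \<dots> \<le> (\<Sum>v\<in>G. \<delta> * norm (lattice_bump_grad r v z))"
  proof (rule norm_sum[THEN order_trans], rule sum_mono)
    fix v assume "v \<in> G"
    then show "norm ((c v - a) *\<^sub>R lattice_bump_grad r v z) \<le> \<delta> * norm (lattice_bump_grad r v z)"
      using active[of v] by (auto intro: mult_right_mono)
  qed
  also have "\<dots> \<le> \<delta> * (DIM('a) * pi / r)"
    unfolding sum_distrib_left[symmetric] G_def
    using sum_norm_lattice_bump_grad_le[OF r box_z] \<open>0 \<le> \<delta>\<close> by (rule mult_left_mono)
  finally show "norm (\<Sum>v\<in>G. c v *\<^sub>R lattice_bump_grad r v z) \<le> \<delta> * DIM('a) * pi / r"
    by simp
qed

definition lattice_point :: "real \<Rightarrow> ('a::euclidean_space \<Rightarrow> int) \<Rightarrow> 'a" where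
  "lattice_point r v = (\<Sum>i\<in>Basis. (r * of_int (v i)) *\<^sub>R i)"

lemma inner_lattice_point: "i \<in> Basis \<Longrightarrow> lattice_point r v \<bullet> i = r * of_int (v i)"
  by (simp add: lattice_point_def inner_sum_left inner_Basis if_distrib[of "(*) _"] cong: if_cong)

lemma norm_diff_lattice_point_le:
  fixes z :: "'a::euclidean_space" and r :: real
  assumes "r > 0" and "\<forall>i\<in>Basis. \<bar>z \<bullet> i / r - of_int (v i)\<bar> < 1"
  shows "norm (z - lattice_point r v) \<le> DIM('a) * r"
proof -
  have "norm (z - lattice_point r v) \<le> (\<Sum>i\<in>(Basis::'a set). \<bar>(z - lattice_point r v) \<bullet> i\<bar>)"
    by (rule norm_le_l1)
  also have "\<dots> \<le> (\<Sum>i\<in>(Basis::'a set). r)"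
  proof (rule sum_mono)
    fix i :: 'a assume i: "i \<in> Basis"
    have "\<bar>(z - lattice_point r v) \<bullet> i\<bar> = r * \<bar>z \<bullet> i / r - of_int (v i)\<bar>"
      using assms(1) i by (simp add: inner_diff_left inner_lattice_point abs_mult[symmetric] field_simps)
    also have "\<dots> \<le> r" using assms i by (simp add: mult_le_cancel_left1 less_imp_le)
    finally show "\<bar>(z - lattice_point r v) \<bullet> i\<bar> \<le> r" .
  qed
  finally show ?thesis by simp
qed

lemma has_derivative_imp_is_C1_deriv:
  assumes "\<And>z. (f has_derivative (\<lambda>h. df z \<bullet> h)) (at z)" and "continuous_on K df"
  shows "is_C1_deriv K f df"
  unfolding is_C1_deriv_def
proof (intro conjI ballI)
  fix z assume "z \<in> K"
  have "(f has_derivative (\<lambda>h. df z \<bullet> h)) (at z within K)"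
    using assms(1) by (rule has_derivative_at_withinI)
  then have "((\<lambda>y. (1 / norm (y - z)) *\<^sub>R (f y - (f z + df z \<bullet> (y - z)))) \<longlongrightarrow> 0) (at z within K)"
    unfolding has_derivative_within by blast
  then show "((\<lambda>y. (f y - f z - df z \<bullet> (y - z)) / norm (y - z)) \<longlongrightarrow> 0) (at z within K)"
    by (simp add: divide_inverse algebra_simps)
qed (rule assms(2))

lemma is_C1_deriv_lattice_interpolant:
  "is_C1_deriv K (\<lambda>z. \<Sum>v\<in>G. c v * lattice_bump r v z) (\<lambda>z. \<Sum>v\<in>G. c v *\<^sub>R lattice_bump_grad r v z)"
proof (rule has_derivative_imp_is_C1_deriv)
  fix z :: "'a::euclidean_space"
  have "((\<lambda>z. \<Sum>v\<in>G. c v * lattice_bump r v z) has_derivative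
      (\<lambda>h. \<Sum>v\<in>G. c v * (lattice_bump_grad r v z \<bullet> h))) (at z)"
    by (intro has_derivative_sum has_derivative_mult_right lattice_bump_has_derivative)
  then show "((\<lambda>z. \<Sum>v\<in>G. c v * lattice_bump r v z) has_derivative
      (\<lambda>h. (\<Sum>v\<in>G. c v *\<^sub>R lattice_bump_grad r v z) \<bullet> h)) (at z)"
    by (simp add: inner_sum_left)
  show "continuous_on K (\<lambda>z. \<Sum>v\<in>G. c v *\<^sub>R lattice_bump_grad r v z)"
    by (intro continuous_intros continuous_on_lattice_bump_grad)
qed

text \<open>Interpolate the values of \<open>g\<close> at the points of \<open>K\<close> closest to the lattice \<open>r \<int>\<^sup>d\<close>, with
  \<open>r\<close> proportional to \<open>\<delta>\<close>: the coefficients of the bumps active at \<open>z\<close> then differ from \<open>g z\<close>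
  by at most \<open>\<delta>\<close>, and the gradient bound \<open>\<delta> d \<pi> / r\<close> no longer depends on \<open>\<delta>\<close>.\<close>

lemma smooth_approximation:
  fixes K :: "'a::euclidean_space set" and g :: "'a \<Rightarrow> real"
  assumes K: "compact K" "K \<noteq> {}" and \<delta>: "0 < \<delta>" "\<delta> < e"
    and g: "\<And>w w'. w \<in> K \<Longrightarrow> w' \<in> K \<Longrightarrow> norm (w - w') < e \<Longrightarrow> \<bar>g w - g w'\<bar> \<le> norm (w - w')"
  obtains f df where "is_C1_deriv K f df" and "\<And>z. z \<in> K \<Longrightarrow> \<bar>f z - g z\<bar> \<le> \<delta>"
    and "\<And>z. z \<in> K \<Longrightarrow> norm (df z) \<le> 2 * pi * real DIM('a) ^ 2"
proof -
  define r where "r = \<delta> / (2 * DIM('a))"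
  have r: "r > 0" using \<delta> by (simp add: r_def)
  define c where "c v = g (closest_point K (lattice_point r v))" for v
  obtain M where M: "\<And>z. z \<in> K \<Longrightarrow> norm z \<le> M"
    using compact_imp_bounded[OF K(1)] unfolding bounded_iff by blast
  define N :: int where "N = \<lceil>M / r\<rceil> + 2"
  define G where "G = PiE (Basis::'a set) (\<lambda>_. {-N..N})"
  define f where "f z = (\<Sum>v\<in>G. c v * lattice_bump r v z)" for z
  define df where "df z = (\<Sum>v\<in>G. c v *\<^sub>R lattice_bump_grad r v z)" for z
  have C1: "is_C1_deriv K f df"
    unfolding f_def[abs_def] df_def[abs_def] by (rule is_C1_deriv_lattice_interpolant)
  have box: "\<bar>w \<bullet> i / r\<bar> \<le> real_of_int N - 1"
    if "z \<in> K" "w \<in> ball z r" "i \<in> Basis" for z w i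
  proof -
    have "\<bar>w \<bullet> i\<bar> \<le> norm w" using Basis_le_norm[OF that(3)] .
    also have "\<dots> \<le> norm z + norm (w - z)" by (simp add: norm_triangle_sub)
    also have "\<dots> \<le> M + r" using M[OF that(1)] that(2) by (simp add: dist_norm norm_minus_commute)
    finally have "\<bar>w \<bullet> i / r\<bar> \<le> M / r + 1" using r by (simp add: field_simps)
    moreover have "M / r \<le> real_of_int \<lceil>M / r\<rceil>" by (rule le_of_int_ceiling)
    moreover have "real_of_int N - 1 = real_of_int \<lceil>M / r\<rceil> + 1" by (simp add: N_def)
    ultimately show ?thesis by linarith
  qed
  have close: "\<bar>c v - g z\<bar> \<le> \<delta>"
    if z: "z \<in> K" and active: "\<forall>i\<in>Basis. \<bar>z \<bullet> i / r - of_int (v i)\<bar> < 1" for z v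
  proof -
    let ?p = "lattice_point r v"
    let ?q = "closest_point K ?p"
    have "?q \<in> K" using closest_point_in_set[OF compact_imp_closed[OF K(1)] K(2)] .
    have "norm (z - ?p) \<le> \<delta> / 2"
      using norm_diff_lattice_point_le[OF r active] r by (simp add: r_def)
    moreover have "dist ?p ?q \<le> dist ?p z" by (rule closest_point_le[OF compact_imp_closed[OF K(1)] z])
    ultimately have "norm (?q - z) \<le> \<delta>"
      using norm_triangle_ineq[of "?q - ?p" "?p - z"] by (simp add: dist_norm norm_minus_commute)
    then show ?thesis
      using g[OF \<open>?q \<in> K\<close> z] \<delta> unfolding c_def by linarith
  qed
  show ?thesis
  proof (rule that[OF C1])
    fix z assume z: "z \<in> K"
    note estimates = lattice_interpolant_estimates[OF r less_imp_le[OF \<delta>(1)] box[OF z] close[OF z]]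
    have "\<bar>f z - g z\<bar> \<le> \<delta>" "norm (df z) \<le> \<delta> * DIM('a) * pi / r"
      using estimates by (simp_all add: f_def df_def G_def)
    moreover have "\<delta> * DIM('a) * pi / r = 2 * pi * real DIM('a) ^ 2"
      using \<delta> by (simp add: r_def power2_eq_square)
    ultimately show "\<bar>f z - g z\<bar> \<le> \<delta>" "norm (df z) \<le> 2 * pi * real DIM('a) ^ 2"
      by simp_all
  qed
qed

definition fine_chain :: "'a::real_normed_vector set \<Rightarrow> real \<Rightarrow> (nat \<Rightarrow> 'a) \<Rightarrow> nat \<Rightarrow> 'a \<Rightarrow> 'a \<Rightarrow> bool" where
  "fine_chain K e z k x y \<longleftrightarrow>
     z 0 = x \<and> z k = y \<and> (\<forall>i\<le>k. z i \<in> K) \<and> (\<forall>i<k. norm (z (Suc i) - z i) < e)"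

definition chain_length :: "(nat \<Rightarrow> 'a::real_normed_vector) \<Rightarrow> nat \<Rightarrow> real" where
  "chain_length z k = (\<Sum>i<k. norm (z (Suc i) - z i))"

lemma chain_length_nonneg: "0 \<le> chain_length z k"
  unfolding chain_length_def by (simp add: sum_nonneg)

lemma chain_length_Suc: "chain_length z (Suc k) = chain_length z k + norm (z (Suc k) - z k)"
  by (simp add: chain_length_def)

lemma norm_diff_le_chain_length:
  assumes "i \<le> j"
  shows "norm (z j - z i) \<le> chain_length z j - chain_length z i"
  using assms
proof (induction j rule: dec_induct)
  case (step n)
  have "norm (z (Suc n) - z i) \<le> norm (z (Suc n) - z n) + norm (z n - z i)"
    using norm_triangle_ineq[of "z (Suc n) - z n" "z n - z i"] by simp
  then show ?case using step by (simp add: chain_length_Suc)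
qed simp

text \<open>The step function \<open>t \<mapsto> z (J t)\<close>, where \<open>J t\<close> is the last index reached within arc length
  \<open>t\<close> times the total length.\<close>

lemma chain_step_parametrization:
  assumes chain: "fine_chain K e z k x y" and "0 < e" and length: "chain_length z k \<le> L"
  obtains P where "P 0 = x" "P 1 = y" "\<And>t. t \<in> {0..1} \<Longrightarrow> P t \<in> K"
    "\<And>s t. 0 \<le> s \<Longrightarrow> s \<le> t \<Longrightarrow> t \<le> 1 \<Longrightarrow> norm (P t - P s) \<le> L * (t - s) + e"
proof -
  define l where "l = chain_length z k"
  define J where "J t = Max {j. j \<le> k \<and> chain_length z j \<le> t * l}" for t
  have l: "0 \<le> l" "l \<le> L" using length by (simp_all add: l_def chain_length_nonneg)
  have J: "J t \<le> k" "chain_length z (J t) \<le> t * l" if "0 \<le> t" for t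
  proof -
    have "0 \<in> {j. j \<le> k \<and> chain_length z j \<le> t * l}"
      using that l by (simp add: chain_length_def)
    then have "J t \<in> {j. j \<le> k \<and> chain_length z j \<le> t * l}"
      unfolding J_def by (intro Max_in) auto
    then show "J t \<le> k" "chain_length z (J t) \<le> t * l" by simp_all
  qed
  have J_max: "j \<le> J t" if "j \<le> k" "chain_length z j \<le> t * l" for j t
    unfolding J_def using that by (intro Max_ge) auto
  show ?thesis
  proof (rule that[of "\<lambda>t. z (J t)"])
    have "chain_length z (J 0) = 0"
      using J[of 0] chain_length_nonneg[of z "J 0"] by simp
    then show "z (J 0) = x"
      using norm_diff_le_chain_length[of 0 "J 0" z] chain by (simp add: fine_chain_def chain_length_def)
    have "J 1 = k" using J[of 1] J_max[of k 1] by (simp add: l_def)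
    then show "z (J 1) = y" using chain by (simp add: fine_chain_def)
    show "z (J t) \<in> K" if "t \<in> {0..1}" for t
      using J[of t] that chain by (simp add: fine_chain_def)
    show "norm (z (J t) - z (J s)) \<le> L * (t - s) + e" if st: "0 \<le> s" "s \<le> t" "t \<le> 1" for s t
    proof -
      have "s * l \<le> t * l" using st l by (simp add: mult_right_mono)
      then have "J s \<le> J t" using J[of s] st by (intro J_max) auto
      then have dist: "norm (z (J t) - z (J s)) \<le> chain_length z (J t) - chain_length z (J s)"
        by (rule norm_diff_le_chain_length)
      have "(t - s) * l \<le> (t - s) * L" using l st by (intro mult_left_mono) auto
      show ?thesis
      proof (cases "J s < k")
        case True
        \<comment> \<open>By maximality of \<open>J s\<close>, the next point of the chain lies beyond arc length \<open>s l\<close>.\<close>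
        then have "\<not> chain_length z (Suc (J s)) \<le> s * l" using J_max[of "Suc (J s)" s] by auto
        moreover have "norm (z (Suc (J s)) - z (J s)) < e" using chain True by (simp add: fine_chain_def)
        ultimately have "s * l - e < chain_length z (J s)" by (simp add: chain_length_Suc)
        then show ?thesis
          using dist J[of t] st \<open>(t - s) * l \<le> (t - s) * L\<close> by (simp add: algebra_simps)
      next
        case False
        then have "J s = k" "J t = k" using J[of s] J[of t] \<open>J s \<le> J t\<close> st by auto
        then show ?thesis using st l \<open>0 < e\<close> by simp
      qed
    qed
  qed
qed

lemma lipschitz_chord_sum_le:
  assumes "L-lipschitz_on UNIV g" and "\<forall>j<n. t j \<le> t (Suc j)"
  shows "(\<Sum>j\<in>{1..n}. norm (g (t j) - g (t (j - 1)))) \<le> L * (t n - t 0)"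
  using assms(2)
proof (induction n)
  case (Suc n)
  have "norm (g (t (Suc n)) - g (t n)) \<le> L * norm (t (Suc n) - t n)"
    using lipschitz_on_normD[OF assms(1)] by simp
  also have "norm (t (Suc n) - t n) = t (Suc n) - t n" using Suc.prems by simp
  finally have "norm (g (t (Suc n)) - g (t n)) \<le> L * (t (Suc n) - t n)" .
  moreover have "(\<Sum>j\<in>{1..n}. norm (g (t j) - g (t (j - 1)))) \<le> L * (t n - t 0)"
    using Suc by simp
  ultimately show ?case by (simp add: algebra_simps)
qed simp

lemma lipschitz_rectifiable_path:
  assumes "L-lipschitz_on UNIV g" and "a \<le> b" and "g ` {a..b} \<subseteq> K"
  shows "rectifiable_path_in K g a b" and "path_length g a b \<le> L * (b - a)"
proof -
  have bound: "c \<le> L * (b - a)" if "c \<in> chord_sums g a b" for c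
    using that lipschitz_chord_sum_le[OF assms(1)] unfolding chord_sums_def by force
  have "norm (g b - g a) \<in> chord_sums g a b"
    unfolding chord_sums_def
    by (intro CollectI exI[of _ "\<lambda>j. if j = 0 then a else b"] exI[of _ 1]) (simp add: \<open>a \<le> b\<close>)
  then have "chord_sums g a b \<noteq> {}" by blast
  then show "path_length g a b \<le> L * (b - a)"
    unfolding path_length_def using bound by (rule cSup_least)
  have "bdd_above (chord_sums g a b)" using bound by (rule bdd_aboveI)
  then show "rectifiable_path_in K g a b"
    unfolding rectifiable_path_in_def
    using assms lipschitz_on_continuous_on[OF lipschitz_on_subset[OF assms(1)]] by blast
qed

lemma almost_lipschitz_subsequence_limit:
  fixes Q :: "nat \<Rightarrow> real \<Rightarrow> 'a::euclidean_space"
  assumes bounded: "\<And>n t. norm (Q n t) \<le> M" and "0 \<le> L"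
    and almost: "\<And>n s t. norm (Q n t - Q n s) \<le> L * \<bar>t - s\<bar> + E n" and E: "E \<longlonglongrightarrow> 0"
  obtains g r where "L-lipschitz_on UNIV g" "strict_mono r" "\<And>q. q \<in> \<rat> \<Longrightarrow> (\<lambda>n. Q (r n) q) \<longlonglongrightarrow> g q"
proof -
  obtain r where r: "strict_mono r" and conv: "\<And>q. q \<in> \<rat> \<Longrightarrow> \<exists>l. (\<lambda>n. Q (r n) q) \<longlonglongrightarrow> l"
    using function_convergent_subsequence[OF countable_rat, of Q M] bounded by blast
  define G where "G q = lim (\<lambda>n. Q (r n) q)" for q
  have G: "(\<lambda>n. Q (r n) q) \<longlonglongrightarrow> G q" if "q \<in> \<rat>" for q
    using conv[OF that] unfolding G_def by (simp add: convergent_LIMSEQ_iff[symmetric] convergent_def)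
  have "L-lipschitz_on \<rat> G"
  proof (rule lipschitz_onI)
    fix s t :: real assume "s \<in> \<rat>" "t \<in> \<rat>"
    have "(\<lambda>n. E (r n)) \<longlonglongrightarrow> 0" using LIMSEQ_subseq_LIMSEQ[OF E r] by (simp add: o_def)
    then have bound: "(\<lambda>n. L * \<bar>s - t\<bar> + E (r n)) \<longlonglongrightarrow> L * \<bar>s - t\<bar>"
      using tendsto_add[OF tendsto_const] by fastforce
    have "(\<lambda>n. norm (Q (r n) s - Q (r n) t)) \<longlonglongrightarrow> norm (G s - G t)"
      by (intro tendsto_intros G \<open>s \<in> \<rat>\<close> \<open>t \<in> \<rat>\<close>)
    then have "norm (G s - G t) \<le> L * \<bar>s - t\<bar>"
      by (rule LIMSEQ_le[OF _ bound]) (use almost in blast)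
    then show "dist (G s) (G t) \<le> L * dist s t" by (simp add: dist_norm dist_real_def)
  qed (rule \<open>0 \<le> L\<close>)
  then obtain g where "L-lipschitz_on UNIV g" "\<And>q. q \<in> \<rat> \<Longrightarrow> g q = G q"
    using lipschitz_extend_closure[of L \<rat> G] unfolding Rats_closure_real by blast
  then show ?thesis using that r G by metis
qed

lemma almost_lipschitz_limit_in_compact:
  fixes P :: "nat \<Rightarrow> real \<Rightarrow> 'a::euclidean_space"
  assumes "compact K" and PK: "\<And>n t. t \<in> {0..1} \<Longrightarrow> P n t \<in> K" and "0 \<le> L"
    and P: "\<And>n s t. 0 \<le> s \<Longrightarrow> s \<le> t \<Longrightarrow> t \<le> 1 \<Longrightarrow> norm (P n t - P n s) \<le> L * (t - s) + E n"
    and E: "E \<longlonglongrightarrow> 0"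
  obtains g :: "real \<Rightarrow> 'a" and r :: "nat \<Rightarrow> nat" where "L-lipschitz_on UNIV g" "g ` {0..1} \<subseteq> K"
    "(\<lambda>n. P (r n) 0) \<longlonglongrightarrow> g 0" "(\<lambda>n. P (r n) 1) \<longlonglongrightarrow> g 1"
proof -
  define clamp :: "real \<Rightarrow> real" where "clamp t = max 0 (min 1 t)" for t
  have clamp: "clamp t \<in> {0..1}" "\<bar>clamp t - clamp s\<bar> \<le> \<bar>t - s\<bar>" for s t by (auto simp: clamp_def)
  define Q where "Q n t = P n (clamp t)" for n t
  obtain M where M: "\<And>w. w \<in> K \<Longrightarrow> norm w \<le> M"
    using compact_imp_bounded[OF assms(1)] unfolding bounded_iff by blast
  have Q: "norm (Q n t - Q n s) \<le> L * \<bar>t - s\<bar> + E n" for n s t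
  proof -
    have "norm (Q n t - Q n s) \<le> L * \<bar>clamp t - clamp s\<bar> + E n"
      using P[of "clamp s" "clamp t" n] P[of "clamp t" "clamp s" n] clamp[of s] clamp[of t]
      by (cases "clamp s \<le> clamp t") (auto simp: Q_def norm_minus_commute)
    also have "\<dots> \<le> L * \<bar>t - s\<bar> + E n" using clamp \<open>0 \<le> L\<close> by (simp add: mult_left_mono)
    finally show ?thesis .
  qed
  obtain g r where g: "L-lipschitz_on UNIV g" and r: "\<And>q. q \<in> \<rat> \<Longrightarrow> (\<lambda>n. Q (r n) q) \<longlonglongrightarrow> g q"
  proof (rule almost_lipschitz_subsequence_limit[of Q M L E])
    show "norm (Q n t) \<le> M" for n t using M PK clamp by (simp add: Q_def)
  qed (use Q \<open>0 \<le> L\<close> E that in auto)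
  have "g q \<in> K" if "q \<in> \<rat>" for q
    using closed_sequentially[OF compact_imp_closed[OF assms(1)] _ r[OF that]] PK clamp by (simp add: Q_def)
  moreover have "continuous_on (closure \<rat>) g"
    using lipschitz_on_continuous_on[OF g] by (simp add: Rats_closure_real)
  ultimately have "g ` closure \<rat> \<subseteq> K"
    using image_closure_subset[OF _ compact_imp_closed[OF assms(1)]] by blast
  then have "g ` {0..1} \<subseteq> K" by (auto simp: Rats_closure_real)
  moreover have "(\<lambda>n. P (r n) 0) \<longlonglongrightarrow> g 0" "(\<lambda>n. P (r n) 1) \<longlonglongrightarrow> g 1"
    using r[of 0] r[of 1] by (simp_all add: Q_def clamp_def)
  ultimately show ?thesis using that g by blast
qed

lemma fine_chains_imp_rectifiable_path:
  fixes K :: "'a::euclidean_space set"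
  assumes "compact K"
    and chains: "\<And>e. e > 0 \<Longrightarrow> \<exists>z k. fine_chain K e z k x y \<and> chain_length z k \<le> L"
  shows "\<exists>g a b. rectifiable_path_in K g a b \<and> g a = x \<and> g b = y \<and> path_length g a b \<le> L"
proof -
  define E :: "nat \<Rightarrow> real" where "E n = inverse (real (Suc n))" for n
  have E: "E n > 0" for n by (simp add: E_def)
  have "\<exists>P. P 0 = x \<and> P 1 = y \<and> (\<forall>t\<in>{0..1}. P t \<in> K) \<and>
      (\<forall>s t. 0 \<le> s \<longrightarrow> s \<le> t \<longrightarrow> t \<le> 1 \<longrightarrow> norm (P t - P s) \<le> L * (t - s) + E n)" for n
  proof -
    obtain z k where "fine_chain K (E n) z k x y" "chain_length z k \<le> L" using chains[OF E] by blast
    then show ?thesis by (rule chain_step_parametrization[OF _ E]) blast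
  qed
  then obtain P where P0: "\<And>n. P n 0 = x" and P1: "\<And>n. P n 1 = y"
    and PK: "\<And>n t. t \<in> {0..1} \<Longrightarrow> P n t \<in> K"
    and P: "\<And>n s t. 0 \<le> s \<Longrightarrow> s \<le> t \<Longrightarrow> t \<le> 1 \<Longrightarrow> norm (P n t - P n s) \<le> L * (t - s) + E n"
    by metis
  have "0 \<le> L"
    using chains[of 1] chain_length_nonneg by (meson order_trans zero_less_one)
  have "E \<longlonglongrightarrow> 0" unfolding E_def by (rule LIMSEQ_inverse_real_of_nat)
  obtain g :: "real \<Rightarrow> 'a" and r :: "nat \<Rightarrow> nat" where g: "L-lipschitz_on UNIV g" "g ` {0..1} \<subseteq> K"
    and "(\<lambda>n. P (r n) 0) \<longlonglongrightarrow> g 0" "(\<lambda>n. P (r n) 1) \<longlonglongrightarrow> g 1"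
    by (rule almost_lipschitz_limit_in_compact[OF assms(1) PK \<open>0 \<le> L\<close> P \<open>E \<longlonglongrightarrow> 0\<close>])
  then have "g 0 = x" "g 1 = y" by (simp_all add: P0 P1 LIMSEQ_const_iff)
  then show ?thesis
    using lipschitz_rectifiable_path[OF g(1), of 0 1 K] g(2) by auto
qed

lemma fine_chain_snoc:
  assumes "fine_chain K e z k x w" "w' \<in> K" "norm (w' - w) < e"
  shows "fine_chain K e (z(Suc k := w')) (Suc k) x w'"
    and "chain_length (z(Suc k := w')) (Suc k) = chain_length z k + norm (w' - w)"
proof -
  have "chain_length (z(Suc k := w')) k = chain_length z k"
    unfolding chain_length_def by (rule sum.cong) auto
  then show "chain_length (z(Suc k := w')) (Suc k) = chain_length z k + norm (w' - w)"
    using assms(1) by (simp add: chain_length_Suc fine_chain_def)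
  show "fine_chain K e (z(Suc k := w')) (Suc k) x w'"
    using assms unfolding fine_chain_def by (auto simp: less_Suc_eq le_Suc_eq)
qed

text \<open>A substitute for the intrinsic distance from \<open>x\<close> that needs no paths to exist; it is only
  Lipschitz at scale \<open>e\<close>, and the cap \<open>T\<close> keeps it bounded where no fine chains reach.\<close>

definition capped_chain_dist :: "'a::real_normed_vector set \<Rightarrow> real \<Rightarrow> real \<Rightarrow> 'a \<Rightarrow> 'a \<Rightarrow> real" where
  "capped_chain_dist K e T x w = Inf (insert T {chain_length z k | z k. fine_chain K e z k x w})"

lemma bdd_below_capped_chain_lengths:
  "0 \<le> T \<Longrightarrow> bdd_below (insert T {chain_length z k | z k. fine_chain K e z k x w})"
  by (rule bdd_belowI[of _ 0]) (auto simp: chain_length_nonneg)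

lemma capped_chain_dist_nonneg: "0 \<le> T \<Longrightarrow> 0 \<le> capped_chain_dist K e T x w"
  unfolding capped_chain_dist_def by (rule cInf_greatest) (auto simp: chain_length_nonneg)

lemma capped_chain_dist_le_cap: "0 \<le> T \<Longrightarrow> capped_chain_dist K e T x w \<le> T"
  unfolding capped_chain_dist_def by (rule cInf_lower[OF insertI1 bdd_below_capped_chain_lengths])

lemma capped_chain_dist_le_chain_length:
  "0 \<le> T \<Longrightarrow> fine_chain K e z k x w \<Longrightarrow> capped_chain_dist K e T x w \<le> chain_length z k"
  unfolding capped_chain_dist_def by (rule cInf_lower[OF _ bdd_below_capped_chain_lengths]) auto

lemma capped_chain_dist_self: "0 \<le> T \<Longrightarrow> x \<in> K \<Longrightarrow> capped_chain_dist K e T x x = 0"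
  using capped_chain_dist_le_chain_length[of T K e "\<lambda>_. x" 0 x x] capped_chain_dist_nonneg[of T K e x x]
  by (simp add: fine_chain_def chain_length_def)

lemma capped_chain_dist_eq_cap:
  assumes "0 \<le> T" and "\<not> (\<exists>z k. fine_chain K e z k x w \<and> chain_length z k \<le> T)"
  shows "capped_chain_dist K e T x w = T"
proof -
  have "T \<le> capped_chain_dist K e T x w"
    unfolding capped_chain_dist_def using assms(2) by (intro cInf_greatest) force+
  then show ?thesis using capped_chain_dist_le_cap[OF assms(1), of K e x w] by simp
qed

lemma capped_chain_dist_lipschitz_at_scale:
  assumes "0 \<le> T" "w \<in> K" "w' \<in> K" "norm (w - w') < e"
  shows "\<bar>capped_chain_dist K e T x w - capped_chain_dist K e T x w'\<bar> \<le> norm (w - w')"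
proof -
  have step: "capped_chain_dist K e T x v' \<le> capped_chain_dist K e T x v + norm (v - v')"
    if "v' \<in> K" "norm (v' - v) < e" for v v'
  proof -
    have "capped_chain_dist K e T x v' - norm (v - v') \<le> u"
      if "u \<in> insert T {chain_length z k | z k. fine_chain K e z k x v}" for u
      using that
    proof
      assume "u = T"
      then show ?thesis
        using capped_chain_dist_le_cap[OF assms(1), of K e x v'] norm_ge_zero[of "v - v'"] by linarith
    next
      assume "u \<in> {chain_length z k | z k. fine_chain K e z k x v}"
      then obtain z k where "fine_chain K e z k x v" "u = chain_length z k" by blast
      then show ?thesis
        using fine_chain_snoc[of K e z k x v v'] capped_chain_dist_le_chain_length[OF assms(1)] \<open>v' \<in> K\<close>
          \<open>norm (v' - v) < e\<close> by (fastforce simp: norm_minus_commute)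
    qed
    then have "capped_chain_dist K e T x v' - norm (v - v') \<le> capped_chain_dist K e T x v"
      unfolding capped_chain_dist_def[of K e T x v] by (intro cInf_greatest) auto
    then show ?thesis by simp
  qed
  show ?thesis
    using step[of w' w] step[of w w'] assms by (simp add: norm_minus_commute abs_le_iff)
qed

lemma C1_norm_le:
  assumes "compact K" "K \<noteq> {}" and df: "is_C1_deriv K f df"
    and "\<And>z. z \<in> K \<Longrightarrow> \<bar>f z\<bar> \<le> a" and "\<And>z. z \<in> K \<Longrightarrow> norm (df z) \<le> b"
  shows "C1_norm K f \<le> a + b"
proof -
  have bdd: "bdd_above ((\<lambda>z. norm (df' z)) ` K)" if "is_C1_deriv K f df'" for df'
  proof -
    have "continuous_on K df'" using that by (simp add: is_C1_deriv_def)
    then have "compact ((\<lambda>z. norm (df' z)) ` K)"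
      by (intro compact_continuous_image continuous_on_norm \<open>compact K\<close>)
    then show ?thesis by (intro bounded_imp_bdd_above compact_imp_bounded)
  qed
  obtain x where "x \<in> K" using \<open>K \<noteq> {}\<close> by blast
  have "(INF df'\<in>{df'. is_C1_deriv K f df'}. SUP z\<in>K. norm (df' z)) \<le> (SUP z\<in>K. norm (df z))"
  proof (rule cINF_lower)
    show "bdd_below ((\<lambda>df'. SUP z\<in>K. norm (df' z)) ` {df'. is_C1_deriv K f df'})"
    proof (rule bdd_belowI[of _ 0])
      fix u assume "u \<in> (\<lambda>df'. SUP z\<in>K. norm (df' z)) ` {df'. is_C1_deriv K f df'}"
      then obtain df' where "is_C1_deriv K f df'" "u = (SUP z\<in>K. norm (df' z))" by blast
      then show "0 \<le> u"
        using cSUP_upper[OF \<open>x \<in> K\<close> bdd] norm_ge_zero order_trans by metis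
    qed
  qed (use df in simp)
  also have "\<dots> \<le> b" using assms(2,5) by (rule cSUP_least)
  moreover have "(SUP z\<in>K. \<bar>f z\<bar>) \<le> a" using assms(2,4) by (rule cSUP_least)
  ultimately show ?thesis unfolding C1_norm_def by linarith
qed

lemma short_fine_chain:
  fixes K :: "'a::euclidean_space set"
  assumes K: "compact K" and xy: "x \<in> K" "y \<in> K" "y \<noteq> x" and "0 < e"
    and bound: "\<And>f. f \<in> C1 K \<Longrightarrow> \<bar>f y - f x\<bar> / norm (y - x) \<le> C * C1_norm K f"
    and "0 \<le> C" and A: "2 * C * (2 + 2 * pi * real DIM('a) ^ 2) < A" and close: "A * norm (y - x) \<le> 1"
  shows "\<exists>z k. fine_chain K e z k x y \<and> chain_length z k \<le> A * norm (y - x)"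
proof (rule ccontr)
  define \<rho> where "\<rho> = norm (y - x)"
  define T where "T = A * \<rho>"
  define B where "B = 2 * pi * real DIM('a) ^ 2"
  have \<rho>: "0 < \<rho>" using xy by (simp add: \<rho>_def)
  have "0 \<le> 2 * C * (2 + B)" using \<open>0 \<le> C\<close> by (simp add: B_def)
  then have "0 < A" using A by (simp add: B_def)
  then have T: "0 < T" "T \<le> 1" using \<rho> close by (simp_all add: T_def \<rho>_def)
  assume "\<not> (\<exists>z k. fine_chain K e z k x y \<and> chain_length z k \<le> A * norm (y - x))"
  then have dist_y: "capped_chain_dist K e T x y = T"
    using T by (intro capped_chain_dist_eq_cap) (auto simp: T_def \<rho>_def)
  define \<delta> where "\<delta> = min (e / 2) (T / 4)"
  have \<delta>: "0 < \<delta>" "\<delta> < e" "\<delta> \<le> T / 4" using \<open>0 < e\<close> T by (auto simp: \<delta>_def)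
  obtain f df where "is_C1_deriv K f df"
    and f: "\<And>z. z \<in> K \<Longrightarrow> \<bar>f z - capped_chain_dist K e T x z\<bar> \<le> \<delta>"
    and df: "\<And>z. z \<in> K \<Longrightarrow> norm (df z) \<le> B"
    unfolding B_def
  proof (rule smooth_approximation[OF K _ \<delta>(1,2)])
    show "K \<noteq> {}" using xy by blast
    show "\<bar>capped_chain_dist K e T x w - capped_chain_dist K e T x w'\<bar> \<le> norm (w - w')"
      if "w \<in> K" "w' \<in> K" "norm (w - w') < e" for w w'
      using capped_chain_dist_lipschitz_at_scale[of T w K w' e x] that T by simp
  qed blast
  then have "f \<in> C1 K" by (auto simp: C1_def)
  have "C1_norm K f \<le> (T + \<delta>) + B"
  proof (rule C1_norm_le[OF K _ \<open>is_C1_deriv K f df\<close> _ df])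
    show "\<bar>f z\<bar> \<le> T + \<delta>" if "z \<in> K" for z
      using f[OF that] capped_chain_dist_nonneg[of T K e x z] capped_chain_dist_le_cap[of T K e x z] T
      by linarith
  qed (use xy in auto)
  then have "C1_norm K f \<le> 2 + B" using T \<delta> by linarith
  have "T / 2 \<le> \<bar>f y - f x\<bar>"
    using f[OF xy(2)] f[OF xy(1)] dist_y capped_chain_dist_self[of T x K e] xy T \<delta> by linarith
  also have "\<dots> \<le> C * C1_norm K f * \<rho>"
    using bound[OF \<open>f \<in> C1 K\<close>] \<rho> by (simp add: \<rho>_def field_simps)
  also have "\<dots> \<le> C * (2 + B) * \<rho>"
    using \<open>C1_norm K f \<le> 2 + B\<close> \<open>0 \<le> C\<close> \<rho> by (intro mult_right_mono mult_left_mono) auto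
  finally have "(A / 2) * \<rho> \<le> (C * (2 + B)) * \<rho>" by (simp add: T_def)
  then have "A / 2 \<le> C * (2 + B)" using \<rho> by (rule mult_right_le_imp_le)
  then show False using A by (simp add: B_def)
qed

lemma short_rectifiable_path:
  fixes K :: "'a::euclidean_space set"
  assumes K: "compact K" and xy: "x \<in> K" "y \<in> K" and "0 \<le> C"
    and bound: "\<And>f. f \<in> C1 K \<Longrightarrow> y \<noteq> x \<Longrightarrow> \<bar>f y - f x\<bar> / norm (y - x) \<le> C * C1_norm K f"
    and A: "2 * C * (2 + 2 * pi * real DIM('a) ^ 2) < A" and close: "A * norm (y - x) \<le> 1"
  shows "\<exists>g a b. rectifiable_path_in K g a b \<and> g a = x \<and> g b = y \<and> path_length g a b \<le> A * norm (x - y)"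
proof (cases "y = x")
  case True
  then show ?thesis
    using lipschitz_rectifiable_path[OF lipschitz_on_constant[of UNIV x], of 0 1 K] xy by auto
next
  case False
  have "\<exists>z k. fine_chain K e z k x y \<and> chain_length z k \<le> A * norm (x - y)" if "e > 0" for e
    using short_fine_chain[OF K xy False that bound[OF _ False] \<open>0 \<le> C\<close> A close]
    by (simp add: norm_minus_commute)
  then show ?thesis by (rule fine_chains_imp_rectifiable_path[OF K])
qed

theorem mainTheorem8:
  fixes K :: "'a::euclidean_space set"
  assumes "compact K" and "connected K"
    and "\<forall>x\<in>K. \<exists>C>0. \<forall>f\<in>C1 K. \<forall>y\<in>K - {x}.
           \<bar>f y - f x\<bar> / norm (y - x) \<le> C * C1_norm K f"
  shows "pointwise_whitney_regular K"
  unfolding pointwise_whitney_regular_def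
proof
  fix x assume x: "x \<in> K"
  obtain C where "C > 0" and bound: "\<And>f y. f \<in> C1 K \<Longrightarrow> y \<in> K - {x} \<Longrightarrow>
      \<bar>f y - f x\<bar> / norm (y - x) \<le> C * C1_norm K f"
    using assms(3) x by blast
  define A where "A = 2 * C * (2 + 2 * pi * real DIM('a) ^ 2) + 1"
  have "A > 0" using \<open>C > 0\<close> by (simp add: A_def add_pos_nonneg)
  have "\<exists>g a b. rectifiable_path_in K g a b \<and> g a = x \<and> g b = y \<and> path_length g a b \<le> A * norm (x - y)"
    if "y \<in> ball x (1 / A) \<inter> K" for y
  proof (rule short_rectifiable_path[OF assms(1) x _ less_imp_le[OF \<open>C > 0\<close>]])
    show "y \<in> K" "A * norm (y - x) \<le> 1"
      using that \<open>A > 0\<close> by (auto simp: dist_norm norm_minus_commute field_simps)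
  qed (use bound that in \<open>auto simp: A_def\<close>)
  then show "\<exists>V C. open V \<and> x \<in> V \<and> C > 0 \<and> (\<forall>y\<in>V \<inter> K. \<exists>g a b. rectifiable_path_in K g a b \<and>
      g a = x \<and> g b = y \<and> path_length g a b \<le> C * norm (x - y))"
    using \<open>A > 0\<close> by (intro exI[of _ "ball x (1 / A)"] exI[of _ A]) auto
qed

end
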